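(* Let $D$ be a distribution over single-qubit states with mean Bloch vector $\vec{\mu} = (0,0,\mu)$, Pauli second moment matrix $\mathcal{S}$ with $\|\mathcal{S}\|_{\mathrm{op}} \le 1-\eta$ for some $\eta \in (0,1)$, and Pauli covariance matrix $\Sigma$. Let $\Delta = \mathrm{diag}\big((1-\mu^2)^{-1/4},(1-\mu^2)^{-1/4},(1-\mu^2)^{-1/2}\big)$. Then there exists $\eta' \in (0,1)$, depending only on $\eta$, such that $\|\Delta\Sigma \Delta\|_{\mathrm{op}} \le 1-\eta'$.
   Context: A single-qubit state is $\rho=\frac12(I+\alpha_xX+\alpha_yY+\alpha_zZ)$ with $\|\vec\alpha\|_2\le 1$ ($X,Y,Z$ the Pauli matrices); $D$ is viewed as a distribution over $\vec\alpha$ with mean Bloch vector $\vec\mu=\mathbb{E}[\vec\alpha]$. The Pauli second moment matrix $\mathcal{S}$ and covariance matrix $\Sigma$ are the $3\times3$ real matrices indexed by $P,Q\in\{X,Y,Z\}$ with $\mathcal{S}_{P,Q}=\mathbb{E}_{\rho\sim D}[\mathrm{tr}(P\rho)\mathrm{tr}(Q\rho)]$ and $\Sigma_{P,Q}=\mathbb{E}_{\rho\sim D}[\mathrm{tr}(P\rho)\mathrm{tr}(Q\rho)]-\mathrm{tr}(P\,\mathbb{E}[\rho])\,\mathrm{tr}(Q\,\mathbb{E}[\rho])$, with rows/columns ordered $X,Y,Z$. *)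

theory Defs
  imports "HOL-Probability.Probability"
begin

text \<open>Bloch vectors are elements of real^3; components 1, 2, 3 correspond to X, Y, Z,
  i.e. a $ 1 = tr(X rho), a $ 2 = tr(Y rho), a $ 3 = tr(Z rho).
  A distribution D over single-qubit states is a probability measure on Bloch vectors
  supported in the closed unit ball.\<close>

definition qubit_distribution :: "(real^3) measure \<Rightarrow> bool" where
  "qubit_distribution M \<longleftrightarrow> prob_space M \<and> sets M = sets borel \<and>
     (AE a in M. norm a \<le> 1)"

definition mean_bloch :: "(real^3) measure \<Rightarrow> real^3" where
  "mean_bloch M = (\<chi> i. \<integral>a. a $ i \<partial>M)"

definition pauli_second_moment :: "(real^3) measure \<Rightarrow> real^3^3" where
  "pauli_second_moment M = (\<chi> i j. \<integral>a. a $ i * a $ j \<partial>M)"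

definition pauli_covariance :: "(real^3) measure \<Rightarrow> real^3^3" where
  "pauli_covariance M = (\<chi> i j. pauli_second_moment M $ i $ j - mean_bloch M $ i * mean_bloch M $ j)"

definition op_norm :: "real^3^3 \<Rightarrow> real" where
  "op_norm A = onorm (\<lambda>x. A *v x)"

definition Delta_mat :: "real \<Rightarrow> real^3^3" where
  "Delta_mat \<mu> = (\<chi> i j. if i = j then (if i = 3 then (1 - \<mu>^2) powr (-1/2)
                                      else (1 - \<mu>^2) powr (-1/4)) else 0)"

end

theory Submission
  imports Defs
begin

text \<open>
  The matrix \<open>\<Delta> \<Sigma> \<Delta>\<close> is positive semidefinite, so its operator norm is bounded by any
  bound on its quadratic form, and \<open>v \<bullet> \<Delta> \<Sigma> \<Delta> v\<close> is the form of \<open>\<Sigma>\<close> at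
  \<open>w = \<Delta> v = (k v\<^sub>1, k v\<^sub>2, k\<^sup>2 v\<^sub>3)\<close>, where \<open>k ^ 4 * c = 1\<close> and \<open>c = 1 - \<mu>\<^sup>2\<close>.
  The form of \<open>\<Sigma>\<close> at \<open>w\<close> is that of the second moment matrix \<open>S\<close> minus \<open>(\<mu> w\<^sub>3)\<^sup>2\<close>,
  and \<open>S \<le> 1 - \<eta>\<close>, \<open>tr S \<le> 1\<close>. One may take \<open>\<eta>' = \<eta>\<^sup>2 / 4\<close>.

  If \<open>\<mu>\<^sup>2 \<le> \<eta> / 2\<close> the rescaling is mild: the form is at most
  \<open>(1 - \<eta>) |w|\<^sup>2 \<le> (1 - \<eta>) / (1 - \<eta> / 2) |v|\<^sup>2\<close>.
  Otherwise split \<open>w\<close> into its \<open>XY\<close> part \<open>x\<close> and its \<open>Z\<close> part \<open>y\<close>. The upper left block of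
  \<open>\<Sigma>\<close> is positive semidefinite, so its form at \<open>x\<close> is at most its trace \<open>c - \<sigma>\<close>
  (with \<open>\<sigma> = \<Sigma>\<^sub>Z\<^sub>Z\<close>) times \<open>k\<^sup>2 (v\<^sub>1\<^sup>2 + v\<^sub>2\<^sup>2)\<close>; the \<open>Z\<close> part contributes \<open>\<sigma> k ^ 4 v\<^sub>3\<^sup>2\<close>, and
  Cauchy--Schwarz for \<open>\<Sigma>\<close> absorbs the cross term. The resulting weight is
  \<open>(c - \<sigma>) k\<^sup>2 + \<sigma> k ^ 4 = 1 - (1 - \<surd>c) (1 - \<sigma> / c)\<close>, and both factors are bounded
  below: \<open>\<surd>c < 1 - \<eta> / 4\<close> since \<open>\<mu>\<^sup>2 > \<eta> / 2\<close>, and \<open>\<sigma> / c \<le> 1 - \<eta>\<close> since \<open>S\<^sub>Z\<^sub>Z \<le> 1 - \<eta>\<close>.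
\<close>

lemma nonneg_quadratic_imp_discriminant_le:
  fixes a b c :: real
  assumes nonneg: "\<And>t. 0 \<le> a + 2 * t * b + t\<^sup>2 * c" and "0 \<le> c"
  shows "b\<^sup>2 \<le> a * c"
proof (cases "c = 0")
  case True
  have "b = 0"
  proof (rule ccontr)
    assume "b \<noteq> 0"
    with True nonneg[of "- (a + 1) / (2 * b)"] show False
      by (simp add: field_simps)
  qed
  with True show ?thesis by simp
next
  case False
  with \<open>0 \<le> c\<close> have "0 < c" by simp
  have "0 \<le> a + 2 * (- b / c) * b + (- b / c)\<^sup>2 * c" by (rule nonneg)
  also have "\<dots> = a - b\<^sup>2 / c"
    using \<open>0 < c\<close> by (simp add: field_simps power2_eq_square)
  finally show ?thesis
    using \<open>0 < c\<close> by (simp add: field_simps)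
qed

lemma symmetric_matrix_inner_commute:
  fixes N :: "real^'n^'n"
  assumes "transpose N = N"
  shows "u \<bullet> (N *v w) = w \<bullet> (N *v u)"
  by (metis assms dot_lmul_matrix inner_commute transpose_matrix_vector)

lemma psd_matrix_Cauchy_Schwarz:
  fixes N :: "real^'n^'n"
  assumes sym: "transpose N = N" and psd: "\<And>v. 0 \<le> v \<bullet> (N *v v)"
  shows "(u \<bullet> (N *v w))\<^sup>2 \<le> (u \<bullet> (N *v u)) * (w \<bullet> (N *v w))"
proof (rule nonneg_quadratic_imp_discriminant_le)
  fix t :: real
  have "0 \<le> (u + t *\<^sub>R w) \<bullet> (N *v (u + t *\<^sub>R w))" by (rule psd)
  also have "\<dots> = u \<bullet> (N *v u) + 2 * t * (u \<bullet> (N *v w)) + t\<^sup>2 * (w \<bullet> (N *v w))"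
    using symmetric_matrix_inner_commute[OF sym, of w u]
    by (simp add: algebra_simps power2_eq_square)
  finally show "0 \<le> u \<bullet> (N *v u) + 2 * t * (u \<bullet> (N *v w)) + t\<^sup>2 * (w \<bullet> (N *v w))" .
qed (rule psd)

lemma psd_matrix_onorm_le:
  fixes N :: "real^'n^'n"
  assumes sym: "transpose N = N" and psd: "\<And>v. 0 \<le> v \<bullet> (N *v v)"
    and bound: "\<And>v. v \<bullet> (N *v v) \<le> l * (v \<bullet> v)"
  shows "onorm ((*v) N) \<le> l"
proof (rule onorm_le)
  fix v :: "real^'n"
  define u where "u = N *v v"
  have "0 \<le> l"
    using psd[of "axis undefined 1"] bound[of "axis undefined 1"] by simp
  have "(u \<bullet> u)\<^sup>2 \<le> (u \<bullet> (N *v u)) * (v \<bullet> (N *v v))"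
    using psd_matrix_Cauchy_Schwarz[OF sym psd, of u v] by (simp add: u_def)
  also have "\<dots> \<le> (l * (u \<bullet> u)) * (l * (v \<bullet> v))"
    by (intro mult_mono bound psd) (use \<open>0 \<le> l\<close> in simp)
  finally have "(u \<bullet> u) * (u \<bullet> u) \<le> (u \<bullet> u) * (l\<^sup>2 * (v \<bullet> v))"
    by (simp add: power2_eq_square algebra_simps)
  then have "u \<bullet> u \<le> l\<^sup>2 * (v \<bullet> v)"
    by (cases "u = 0") (simp_all add: mult_le_cancel_left)
  then have "(norm u)\<^sup>2 \<le> (l * norm v)\<^sup>2"
    by (simp add: power_mult_distrib power2_norm_eq_inner)
  then show "norm (N *v v) \<le> l * norm v"
    unfolding u_def by (rule power2_le_imp_le) (use \<open>0 \<le> l\<close> in simp)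
qed

lemma inner_matrix_le_onorm:
  fixes A :: "real^'n^'n"
  shows "v \<bullet> (A *v v) \<le> onorm ((*v) A) * (v \<bullet> v)"
proof -
  have "v \<bullet> (A *v v) \<le> norm v * norm (A *v v)" by (rule norm_cauchy_schwarz)
  also have "\<dots> \<le> norm v * (onorm ((*v) A) * norm v)"
    by (intro mult_left_mono onorm) auto
  finally show ?thesis by (simp add: power2_eq_square power2_norm_eq_inner[symmetric] algebra_simps)
qed

lemma psd_matrix_form_add_le:
  fixes N :: "real^'n^'n"
  assumes sym: "transpose N = N" and psd: "\<And>v. 0 \<le> v \<bullet> (N *v v)"
    and x: "x \<bullet> (N *v x) \<le> \<alpha> * p" and y: "y \<bullet> (N *v y) \<le> \<beta> * q"
    and "0 \<le> \<alpha>" "0 \<le> \<beta>" "0 \<le> p" "0 \<le> q"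
  shows "(x + y) \<bullet> (N *v (x + y)) \<le> (\<alpha> + \<beta>) * (p + q)"
proof -
  define X Y C where "X = x \<bullet> (N *v x)" and "Y = y \<bullet> (N *v y)" and "C = x \<bullet> (N *v y)"
  have "C\<^sup>2 \<le> X * Y"
    using psd_matrix_Cauchy_Schwarz[OF sym psd] by (simp add: X_def Y_def C_def)
  moreover have "X * Y \<le> (\<alpha> * p) * (\<beta> * q)"
    using x y psd assms(5-8) by (intro mult_mono) (auto simp: X_def Y_def)
  moreover have "4 * ((\<alpha> * p) * (\<beta> * q)) \<le> (\<alpha> * q + \<beta> * p)\<^sup>2"
    using sum_squares_ge_zero[of "\<alpha> * q - \<beta> * p" 0] by (simp add: power2_eq_square algebra_simps)
  ultimately have "(2 * C)\<^sup>2 \<le> (\<alpha> * q + \<beta> * p)\<^sup>2"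
    by (simp add: power_mult_distrib)
  then have "2 * C \<le> \<alpha> * q + \<beta> * p"
    by (rule power2_le_imp_le) (use assms(5-8) in simp)
  moreover have "(x + y) \<bullet> (N *v (x + y)) = X + 2 * C + Y"
    using symmetric_matrix_inner_commute[OF sym, of y x]
    by (simp add: X_def Y_def C_def matrix_vector_right_distrib inner_add_left inner_add_right)
  ultimately show ?thesis
    using x y by (simp add: X_def Y_def algebra_simps)
qed

lemma qubit_distribution_integrable:
  fixes f :: "real^3 \<Rightarrow> real"
  assumes M: "qubit_distribution M" and f: "f \<in> borel_measurable borel"
    and bound: "\<And>a. norm a \<le> 1 \<Longrightarrow> \<bar>f a\<bar> \<le> B"
  shows "integrable M f"
proof -
  interpret prob_space M using M by (simp add: qubit_distribution_def)
  have "sets M = sets borel" "AE a in M. norm a \<le> 1"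
    using M by (simp_all add: qubit_distribution_def)
  show ?thesis
  proof (rule integrable_const_bound)
    show "AE a in M. norm (f a) \<le> B"
      using \<open>AE a in M. norm a \<le> 1\<close> by eventually_elim (simp add: bound)
    show "f \<in> borel_measurable M"
      using f measurable_cong_sets[OF \<open>sets M = sets borel\<close> refl[of "sets (borel :: real measure)"]]
      by simp
  qed
qed

lemma qubit_distribution_integrable_moments:
  assumes "qubit_distribution M"
  shows "integrable M (\<lambda>a. a $ i * a $ j)" and "integrable M (\<lambda>a. w \<bullet> a)"
    and "integrable M (\<lambda>a. (w \<bullet> a)\<^sup>2)"
proof -
  have "\<bar>a $ i * a $ j\<bar> \<le> 1" if "norm a \<le> 1" for a :: "real^3"
    using that component_le_norm_cart[of a i] component_le_norm_cart[of a j]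
    by (simp add: abs_mult mult_le_one)
  then show "integrable M (\<lambda>a. a $ i * a $ j)"
    by (intro qubit_distribution_integrable[OF assms]) auto
  have inner_le: "\<bar>w \<bullet> a\<bar> \<le> norm w" if "norm a \<le> 1" for a :: "real^3"
    using Cauchy_Schwarz_ineq2[of w a] that mult_left_mono[OF that, of "norm w"] by simp
  then show "integrable M (\<lambda>a. w \<bullet> a)"
    by (intro qubit_distribution_integrable[OF assms]) auto
  have "\<bar>(w \<bullet> a)\<^sup>2\<bar> \<le> (norm w)\<^sup>2" if "norm a \<le> 1" for a :: "real^3"
    using power_mono[OF inner_le[OF that] abs_ge_zero, of 2] by simp
  then show "integrable M (\<lambda>a. (w \<bullet> a)\<^sup>2)"
    by (intro qubit_distribution_integrable[OF assms]) auto
qed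

lemma mean_bloch_inner:
  assumes "qubit_distribution M"
  shows "w \<bullet> mean_bloch M = (\<integral>a. w \<bullet> a \<partial>M)"
proof -
  have "integrable M (\<lambda>a. a $ i)" for i
    using qubit_distribution_integrable_moments(2)[OF assms, of "axis i 1"]
    by (simp add: inner_axis')
  then show ?thesis
    by (simp add: mean_bloch_def inner_vec_def)
qed

lemma pauli_second_moment_inner:
  assumes "qubit_distribution M"
  shows "w \<bullet> (pauli_second_moment M *v w) = (\<integral>a. (w \<bullet> a)\<^sup>2 \<partial>M)"
proof -
  note integrable = qubit_distribution_integrable_moments(1)[OF assms]
  have "w \<bullet> (pauli_second_moment M *v w) = (\<Sum>i\<in>UNIV. \<Sum>j\<in>UNIV. w $ i * w $ j * (\<integral>a. a $ i * a $ j \<partial>M))"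
    by (simp add: pauli_second_moment_def inner_vec_def matrix_vector_mult_def sum_distrib_left ac_simps)
  also have "\<dots> = (\<integral>a. (\<Sum>i\<in>UNIV. \<Sum>j\<in>UNIV. w $ i * w $ j * (a $ i * a $ j)) \<partial>M)"
    using integrable by simp
  also have "\<dots> = (\<integral>a. (w \<bullet> a)\<^sup>2 \<partial>M)"
    by (simp add: inner_vec_def power2_eq_square sum_product ac_simps)
  finally show ?thesis .
qed

lemma pauli_covariance_inner:
  "w \<bullet> (pauli_covariance M *v w) = w \<bullet> (pauli_second_moment M *v w) - (w \<bullet> mean_bloch M)\<^sup>2"
  by (simp add: pauli_covariance_def inner_vec_def matrix_vector_mult_def sum_3 power2_eq_square algebra_simps)

lemma pauli_covariance_nonneg:
  assumes "qubit_distribution M"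
  shows "0 \<le> w \<bullet> (pauli_covariance M *v w)"
proof -
  interpret prob_space M using assms by (simp add: qubit_distribution_def)
  have "w \<bullet> (pauli_covariance M *v w) = variance (\<lambda>a. w \<bullet> a)"
    using qubit_distribution_integrable_moments(2,3)[OF assms]
    by (simp add: pauli_covariance_inner pauli_second_moment_inner mean_bloch_inner assms variance_eq)
  then show ?thesis by (simp add: variance_positive)
qed

lemma transpose_pauli_covariance: "transpose (pauli_covariance M) = pauli_covariance M"
  by (simp add: transpose_def pauli_covariance_def pauli_second_moment_def vec_eq_iff mult.commute)

lemma trace_pauli_second_moment_le:
  assumes "qubit_distribution M"
  shows "trace (pauli_second_moment M) \<le> 1"
proof -
  interpret prob_space M using assms by (simp add: qubit_distribution_def)
  have "trace (pauli_second_moment M) = (\<integral>a. a \<bullet> a \<partial>M)"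
    using qubit_distribution_integrable_moments(1)[OF assms]
    by (simp add: trace_def pauli_second_moment_def inner_vec_def)
  also have "\<dots> \<le> (\<integral>a. 1 \<partial>M)"
  proof (rule integral_mono_AE)
    show "integrable M (\<lambda>a. a \<bullet> a)"
      using qubit_distribution_integrable_moments(1)[OF assms] by (simp add: inner_vec_def)
    have "AE a in M. norm a \<le> 1"
      using assms by (simp add: qubit_distribution_def)
    then show "AE a in M. a \<bullet> a \<le> 1"
      by eventually_elim (simp add: power2_norm_eq_inner[symmetric] power_le_one)
  qed simp
  finally show ?thesis by (simp add: prob_space)
qed

lemma trace_pauli_covariance:
  "trace (pauli_covariance M) = trace (pauli_second_moment M) - (norm (mean_bloch M))\<^sup>2"
  unfolding power2_norm_eq_inner by (simp add: trace_def pauli_covariance_def sum_subtractf inner_vec_def)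

lemma inner_sandwich_matrix:
  fixes D A :: "real^'n^'n"
  assumes "transpose D = D"
  shows "v \<bullet> ((D ** A ** D) *v v) = (D *v v) \<bullet> (A *v (D *v v))"
  by (metis assms dot_lmul_matrix matrix_vector_mul_assoc transpose_matrix_vector)

lemma transpose_sandwich_matrix:
  fixes D A :: "real^'n^'n"
  assumes "transpose D = D" and "transpose A = A"
  shows "transpose (D ** A ** D) = D ** A ** D"
  by (simp add: assms matrix_transpose_mul matrix_mul_assoc)

lemma transpose_Delta_mat: "transpose (Delta_mat \<mu>) = Delta_mat \<mu>"
  by (simp add: transpose_def Delta_mat_def vec_eq_iff)

lemma Delta_mat_scaling:
  assumes "\<mu>\<^sup>2 < 1"
  obtains k :: real where "1 \<le> k" and "k ^ 4 * (1 - \<mu>\<^sup>2) = 1"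
    and "\<And>v. Delta_mat \<mu> *v v = vector [k * v $ 1, k * v $ 2, k\<^sup>2 * v $ 3]"
proof
  define c where "c = 1 - \<mu>\<^sup>2"
  define k where "k = c powr (- 1 / 4)"
  have "0 < c" "c \<le> 1" using assms by (simp_all add: c_def)
  have k2: "k\<^sup>2 = c powr (- 1 / 2)"
    unfolding k_def using \<open>0 < c\<close> by (subst powr_power) simp_all
  have k4: "k ^ 4 = 1 / c"
    unfolding k_def using \<open>0 < c\<close> by (subst powr_power) (simp_all add: powr_minus_divide)
  then show "k ^ 4 * (1 - \<mu>\<^sup>2) = 1" using \<open>0 < c\<close> by (simp add: c_def)
  show "Delta_mat \<mu> *v v = vector [k * v $ 1, k * v $ 2, k\<^sup>2 * v $ 3]" for v
    using k2 by (simp add: Delta_mat_def matrix_vector_mult_def vec_eq_iff forall_3 sum_3 k_def c_def)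
  have "1 \<le> k ^ 4" using k4 \<open>0 < c\<close> \<open>c \<le> 1\<close> by simp
  moreover have "0 \<le> k" by (simp add: k_def)
  ultimately show "1 \<le> k" using power_less_one_iff[of k 4] by fastforce
qed

lemma Delta_mat_form_le_small_mean:
  fixes \<Sigma> :: "real^3^3"
  assumes bound: "\<And>w. w \<bullet> (\<Sigma> *v w) + (\<mu> * w $ 3)\<^sup>2 \<le> (1 - \<eta>) * (w \<bullet> w)"
    and "\<mu>\<^sup>2 \<le> \<eta> / 2" and "0 < \<eta>" and "\<eta> < 1"
  shows "(Delta_mat \<mu> *v v) \<bullet> (\<Sigma> *v (Delta_mat \<mu> *v v)) \<le> (1 - \<eta>\<^sup>2 / 4) * (v \<bullet> v)"
proof -
  have "\<mu>\<^sup>2 < 1" using assms(2,4) by linarith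
  then obtain k where "1 \<le> k" and k4: "k ^ 4 * (1 - \<mu>\<^sup>2) = 1"
    and Dv: "\<And>u. Delta_mat \<mu> *v u = vector [k * u $ 1, k * u $ 2, k\<^sup>2 * u $ 3]"
    using Delta_mat_scaling by blast
  define w where "w = Delta_mat \<mu> *v v"
  have "k\<^sup>2 \<le> k ^ 4"
    using \<open>1 \<le> k\<close> power_increasing[of 2 4 k] by simp
  have "w \<bullet> w = k\<^sup>2 * ((v $ 1)\<^sup>2 + (v $ 2)\<^sup>2) + k ^ 4 * (v $ 3)\<^sup>2"
    by (simp add: w_def Dv inner_vec_def sum_3 algebra_simps flip: power2_eq_square)
  also have "\<dots> \<le> k ^ 4 * ((v $ 1)\<^sup>2 + (v $ 2)\<^sup>2) + k ^ 4 * (v $ 3)\<^sup>2"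
    using \<open>k\<^sup>2 \<le> k ^ 4\<close> by (simp add: mult_right_mono)
  also have "\<dots> = k ^ 4 * (v \<bullet> v)"
    by (simp add: inner_vec_def sum_3 power2_eq_square algebra_simps)
  finally have ww: "w \<bullet> w \<le> k ^ 4 * (v \<bullet> v)" .
  have "1 - \<eta> \<le> (1 - \<eta>\<^sup>2 / 4) * (1 - \<eta> / 2)"
  proof -
    have "0 \<le> \<eta> * (1 / 2 - \<eta> / 4 + \<eta>\<^sup>2 / 8)"
      using assms(3,4) by (intro mult_nonneg_nonneg) (auto simp: power2_eq_square)
    then show ?thesis by (simp add: algebra_simps power2_eq_square power3_eq_cube)
  qed
  also have "\<dots> \<le> (1 - \<eta>\<^sup>2 / 4) * (1 - \<mu>\<^sup>2)"
    using assms(2-4) power_le_one[of \<eta> 2] by (intro mult_left_mono) auto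
  finally have "(1 - \<eta>) * k ^ 4 \<le> (1 - \<eta>\<^sup>2 / 4) * (1 - \<mu>\<^sup>2) * k ^ 4"
    by (rule mult_right_mono) simp
  also have "\<dots> = 1 - \<eta>\<^sup>2 / 4"
    by (metis k4 mult.assoc mult.commute mult.right_neutral)
  finally have "(1 - \<eta>) * k ^ 4 \<le> 1 - \<eta>\<^sup>2 / 4" .
  have "w \<bullet> (\<Sigma> *v w) \<le> (1 - \<eta>) * (w \<bullet> w)"
    using bound[of w] zero_le_power2[of "\<mu> * w $ 3"] by linarith
  also have "\<dots> \<le> ((1 - \<eta>) * k ^ 4) * (v \<bullet> v)"
    using ww assms(4) by (simp add: mult_left_mono mult.assoc)
  also have "\<dots> \<le> (1 - \<eta>\<^sup>2 / 4) * (v \<bullet> v)"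
    using \<open>(1 - \<eta>) * k ^ 4 \<le> 1 - \<eta>\<^sup>2 / 4\<close> by (simp add: mult_right_mono)
  finally show ?thesis by (simp add: w_def)
qed

lemma rescaled_block_weights_le:
  fixes c \<sigma> k \<eta> :: real
  assumes k4: "k ^ 4 * c = 1" and "0 \<le> \<sigma>" and "\<sigma> \<le> c - \<eta>"
    and "c < 1 - \<eta> / 2" and "0 < \<eta>"
  shows "(c - \<sigma>) * k\<^sup>2 + \<sigma> * k ^ 4 \<le> 1 - \<eta>\<^sup>2 / 4"
proof -
  define s t where "s = c * k\<^sup>2" and "t = \<sigma> * k ^ 4"
  have "s\<^sup>2 = c\<^sup>2 * k ^ 4"
    by (simp add: s_def power_mult_distrib flip: power_mult)
  also have "\<dots> = c * (k ^ 4 * c)"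
    by (simp add: power2_eq_square mult_ac)
  finally have s2: "s\<^sup>2 = c" using k4 by simp
  have "s * t = \<sigma> * k\<^sup>2 * (k ^ 4 * c)"
    by (simp add: s_def t_def mult_ac)
  then have st: "\<sigma> * k\<^sup>2 = s * t" by (simp only: k4 mult_1_right)
  have "(c - \<sigma>) * k\<^sup>2 + \<sigma> * k ^ 4 = c * k\<^sup>2 - \<sigma> * k\<^sup>2 + \<sigma> * k ^ 4"
    by (simp add: algebra_simps)
  also have "\<dots> = 1 - (1 - s) * (1 - t)"
    unfolding st by (simp add: algebra_simps s_def t_def)
  finally have lhs: "(c - \<sigma>) * k\<^sup>2 + \<sigma> * k ^ 4 = 1 - (1 - s) * (1 - t)" .
  have "c \<le> 1" using assms(4,5) by linarith
  then have "k ^ 4 * c \<le> k ^ 4 * 1" by (intro mult_left_mono) simp_all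
  then have "1 \<le> k ^ 4" using k4 by simp
  have "t \<le> (c - \<eta>) * k ^ 4"
    unfolding t_def using assms(3) by (rule mult_right_mono) simp
  also have "\<dots> = 1 - \<eta> * k ^ 4"
    using k4 by (simp add: algebra_simps)
  also have "\<dots> \<le> 1 - \<eta>"
    using \<open>1 \<le> k ^ 4\<close> \<open>0 < \<eta>\<close> mult_left_mono[of 1 "k ^ 4" \<eta>] by simp
  finally have "\<eta> \<le> 1 - t" by simp
  have "s < 1 - \<eta> / 4"
  proof (rule power2_less_imp_less)
    show "s\<^sup>2 < (1 - \<eta> / 4)\<^sup>2"
    proof -
      have "(1 - \<eta> / 4)\<^sup>2 = 1 - \<eta> / 2 + \<eta>\<^sup>2 / 16"
        by (simp add: power2_eq_square algebra_simps)
      then show ?thesis using s2 assms(4) zero_le_power2[of \<eta>] by linarith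
    qed
  qed (use assms(2-5) in linarith)
  then have "\<eta> / 4 * \<eta> \<le> (1 - s) * (1 - t)"
    using \<open>\<eta> \<le> 1 - t\<close> \<open>0 < \<eta>\<close> by (intro mult_mono) auto
  then show ?thesis
    using lhs by (simp add: power2_eq_square)
qed

lemma Delta_mat_form_le_large_mean:
  fixes \<Sigma> :: "real^3^3"
  assumes sym: "transpose \<Sigma> = \<Sigma>" and psd: "\<And>w. 0 \<le> w \<bullet> (\<Sigma> *v w)"
    and trace: "trace \<Sigma> + \<mu>\<^sup>2 \<le> 1" and corner: "\<Sigma> $ 3 $ 3 + \<mu>\<^sup>2 \<le> 1 - \<eta>"
    and "\<eta> / 2 < \<mu>\<^sup>2" and "0 < \<eta>"
  shows "(Delta_mat \<mu> *v v) \<bullet> (\<Sigma> *v (Delta_mat \<mu> *v v)) \<le> (1 - \<eta>\<^sup>2 / 4) * (v \<bullet> v)"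
proof -
  define c \<sigma> where "c = 1 - \<mu>\<^sup>2" and "\<sigma> = \<Sigma> $ 3 $ 3"
  define p q where "p = (v $ 1)\<^sup>2 + (v $ 2)\<^sup>2" and "q = (v $ 3)\<^sup>2"
  have "0 \<le> \<sigma>"
    using psd[of "axis 3 1"] by (simp add: \<sigma>_def axis_def inner_vec_def matrix_vector_mult_def sum_3)
  then have "\<mu>\<^sup>2 < 1" using corner assms(6) by (simp add: \<sigma>_def)
  then obtain k where k4: "k ^ 4 * c = 1"
    and Dv: "\<And>u. Delta_mat \<mu> *v u = vector [k * u $ 1, k * u $ 2, k\<^sup>2 * u $ 3]"
    unfolding c_def using Delta_mat_scaling by blast
  define x y :: "real^3"
    where "x = vector [k * v $ 1, k * v $ 2, 0]" and "y = vector [0, 0, k\<^sup>2 * v $ 3]"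
  have Dv_split: "Delta_mat \<mu> *v v = x + y"
    by (simp add: Dv x_def y_def vec_eq_iff forall_3)
  have "x \<bullet> (\<Sigma> *v x) \<le> (\<Sigma> $ 1 $ 1 + \<Sigma> $ 2 $ 2) * (k\<^sup>2 * p)"
  proof -
    \<comment> \<open>\<open>x'\<close> is \<open>x\<close> turned by a right angle in the \<open>XY\<close> plane; the two forms add up to
      the trace of the upper left block times \<open>|x|\<^sup>2\<close>.\<close>
    define x' :: "real^3" where "x' = vector [k * v $ 2, - (k * v $ 1), 0]"
    have "\<Sigma> $ 2 $ 1 = \<Sigma> $ 1 $ 2"
      by (subst sym[symmetric]) (simp add: transpose_def)
    then have "x \<bullet> (\<Sigma> *v x) + x' \<bullet> (\<Sigma> *v x') = (\<Sigma> $ 1 $ 1 + \<Sigma> $ 2 $ 2) * (k\<^sup>2 * p)"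
      by (simp add: x_def x'_def p_def inner_vec_def matrix_vector_mult_def sum_3 power2_eq_square algebra_simps)
    then show ?thesis using psd[of x'] by linarith
  qed
  also have "\<dots> \<le> ((c - \<sigma>) * k\<^sup>2) * p"
    using trace by (simp add: c_def \<sigma>_def p_def trace_def sum_3 mult_right_mono mult.assoc)
  finally have x_le: "x \<bullet> (\<Sigma> *v x) \<le> ((c - \<sigma>) * k\<^sup>2) * p" .
  have y_eq: "y \<bullet> (\<Sigma> *v y) = (\<sigma> * k ^ 4) * q"
    by (simp add: y_def q_def \<sigma>_def inner_vec_def matrix_vector_mult_def sum_3 power2_eq_square power4_eq_xxxx algebra_simps)
  have "c - \<sigma> \<ge> \<eta>" using corner by (simp add: c_def \<sigma>_def)
  have "(Delta_mat \<mu> *v v) \<bullet> (\<Sigma> *v (Delta_mat \<mu> *v v)) \<le> ((c - \<sigma>) * k\<^sup>2 + \<sigma> * k ^ 4) * (p + q)"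
    unfolding Dv_split using \<open>0 \<le> \<sigma>\<close> \<open>c - \<sigma> \<ge> \<eta>\<close> \<open>0 < \<eta>\<close>
    by (intro psd_matrix_form_add_le[OF sym psd x_le]) (simp_all add: y_eq p_def q_def)
  also have "\<dots> \<le> (1 - \<eta>\<^sup>2 / 4) * (p + q)"
  proof (rule mult_right_mono)
    show "(c - \<sigma>) * k\<^sup>2 + \<sigma> * k ^ 4 \<le> 1 - \<eta>\<^sup>2 / 4"
      using k4 \<open>0 \<le> \<sigma>\<close> \<open>c - \<sigma> \<ge> \<eta>\<close> assms(5,6)
      by (intro rescaled_block_weights_le) (auto simp: c_def)
  qed (simp add: p_def q_def)
  also have "p + q = v \<bullet> v"
    by (simp add: p_def q_def inner_vec_def sum_3 power2_eq_square)
  finally show ?thesis .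
qed

lemma onorm_Delta_mat_sandwich_le:
  fixes \<Sigma> :: "real^3^3"
  assumes sym: "transpose \<Sigma> = \<Sigma>" and psd: "\<And>w. 0 \<le> w \<bullet> (\<Sigma> *v w)"
    and trace: "trace \<Sigma> + \<mu>\<^sup>2 \<le> 1"
    and bound: "\<And>w. w \<bullet> (\<Sigma> *v w) + (\<mu> * w $ 3)\<^sup>2 \<le> (1 - \<eta>) * (w \<bullet> w)"
    and "0 < \<eta>" and "\<eta> < 1"
  shows "onorm ((*v) (Delta_mat \<mu> ** \<Sigma> ** Delta_mat \<mu>)) \<le> 1 - \<eta>\<^sup>2 / 4"
proof (rule psd_matrix_onorm_le)
  show "transpose (Delta_mat \<mu> ** \<Sigma> ** Delta_mat \<mu>) = Delta_mat \<mu> ** \<Sigma> ** Delta_mat \<mu>"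
    by (rule transpose_sandwich_matrix[OF transpose_Delta_mat sym])
  fix v :: "real^3"
  show "0 \<le> v \<bullet> ((Delta_mat \<mu> ** \<Sigma> ** Delta_mat \<mu>) *v v)"
    by (simp add: inner_sandwich_matrix[OF transpose_Delta_mat] psd)
  have "\<Sigma> $ 3 $ 3 + \<mu>\<^sup>2 \<le> 1 - \<eta>"
    using bound[of "axis 3 1"] by (simp add: axis_def inner_vec_def matrix_vector_mult_def sum_3)
  then show "v \<bullet> ((Delta_mat \<mu> ** \<Sigma> ** Delta_mat \<mu>) *v v) \<le> (1 - \<eta>\<^sup>2 / 4) * (v \<bullet> v)"
    unfolding inner_sandwich_matrix[OF transpose_Delta_mat]
    using Delta_mat_form_le_small_mean[OF bound _ assms(5,6)]
      Delta_mat_form_le_large_mean[OF sym psd trace _ _ assms(5)]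
    by (cases "\<mu>\<^sup>2 \<le> \<eta> / 2") auto
qed

theorem mainTheorem7:
  fixes \<eta> :: real
  assumes "0 < \<eta>" and "\<eta> < 1"
  shows "\<exists>\<eta>'. 0 < \<eta>' \<and> \<eta>' < 1 \<and>
    (\<forall>(M :: (real^3) measure) (\<mu> :: real).
       qubit_distribution M \<longrightarrow>
       mean_bloch M = vector [0, 0, \<mu>] \<longrightarrow>
       op_norm (pauli_second_moment M) \<le> 1 - \<eta> \<longrightarrow>
       op_norm (Delta_mat \<mu> ** pauli_covariance M ** Delta_mat \<mu>) \<le> 1 - \<eta>')"
proof (intro exI[of _ "\<eta>\<^sup>2 / 4"] conjI allI impI)
  show "0 < \<eta>\<^sup>2 / 4" and "\<eta>\<^sup>2 / 4 < 1"
    using assms power_strict_mono[of \<eta> 1 2] by simp_all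
  fix M :: "(real^3) measure" and \<mu> :: real
  assume M: "qubit_distribution M" and mean: "mean_bloch M = vector [0, 0, \<mu>]"
    and S: "op_norm (pauli_second_moment M) \<le> 1 - \<eta>"
  have mean_inner: "w \<bullet> mean_bloch M = \<mu> * w $ 3" for w :: "real^3"
    by (simp add: mean inner_vec_def sum_3)
  have "trace (pauli_covariance M) + \<mu>\<^sup>2 \<le> 1"
    using trace_pauli_second_moment_le[OF M]
    by (simp add: trace_pauli_covariance power2_norm_eq_inner mean_inner) (simp add: mean power2_eq_square)
  moreover have "w \<bullet> (pauli_covariance M *v w) + (\<mu> * w $ 3)\<^sup>2 \<le> (1 - \<eta>) * (w \<bullet> w)" for w
  proof -
    have "w \<bullet> (pauli_covariance M *v w) + (\<mu> * w $ 3)\<^sup>2 = w \<bullet> (pauli_second_moment M *v w)"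
      by (simp add: pauli_covariance_inner mean_inner)
    also have "\<dots> \<le> op_norm (pauli_second_moment M) * (w \<bullet> w)"
      unfolding op_norm_def by (rule inner_matrix_le_onorm)
    also have "\<dots> \<le> (1 - \<eta>) * (w \<bullet> w)"
      using S by (simp add: mult_right_mono)
    finally show ?thesis .
  qed
  ultimately show "op_norm (Delta_mat \<mu> ** pauli_covariance M ** Delta_mat \<mu>) \<le> 1 - \<eta>\<^sup>2 / 4"
    unfolding op_norm_def
    using onorm_Delta_mat_sandwich_le[OF transpose_pauli_covariance pauli_covariance_nonneg[OF M]] assms
    by blast
qed

end
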